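(* Let $S$ be a finitely generated cancellative semigroup which cannot be embedded in a group. Then $|\Omega S|=2^{\aleph_0}$.
   Context: $S$ is cancellative if both $ax=ay\Rightarrow x=y$ and $xa=ya\Rightarrow x=y$ for all $a,x,y\in S$. A digraph on $\Omega$ is a subset $\Gamma\subseteq\Omega\times\Omega$. A path is a sequence of pairwise distinct vertices $(v_0,v_1,\ldots)$ with $(v_i,v_{i+1})\in\Gamma$ (length 0 allowed); a ray is an infinite path; an anti-ray is an infinite sequence of distinct vertices with $(v_{i+1},v_i)\in\Gamma$. For infinite $\Sigma',\Sigma\subseteq\Omega$, $\Sigma'\preccurlyeq\Sigma$ means there are infinitely many pairwise vertex-disjoint paths from vertices of $\Sigma'$ to vertices of $\Sigma$. On rays and anti-rays $\preccurlyeq$ is a preorder with associated equivalence $\approx$; the ends are the $\approx$-classes of rays and anti-rays, and $\Omega\Gamma$ is the poset of ends. The right Cayley graph $\Gamma_r(S,A)$ has vertex set $S$ and edges $(x,xa)$, $x\in S$, $a\in A$. For finitely generated $S$, $\Omega S:=\Omega\Gamma_r(S,A)$ for any finite generating set $A$ (well defined up to isomorphism). *)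

theory Defs
  imports "HOL-Algebra.Group" "HOL-Library.Equipollence"
begin

definition cancellative :: "'a::semigroup_mult itself \<Rightarrow> bool" where
  "cancellative _ \<longleftrightarrow>
     (\<forall>(a::'a) x y. a * x = a * y \<longrightarrow> x = y) \<and> (\<forall>(a::'a) x y. x * a = y * a \<longrightarrow> x = y)"

inductive_set generated :: "'a::semigroup_mult set \<Rightarrow> 'a set" for A where
  gen_base: "a \<in> A \<Longrightarrow> a \<in> generated A"
| gen_step: "x \<in> generated A \<Longrightarrow> a \<in> A \<Longrightarrow> x * a \<in> generated A"

text \<open>A finitely generated semigroup is countable, so
  it embeds into some group iff it embeds into a group whose carrier consists of
  natural numbers (take the subgroup generated by the image and transport it).\<close>
definition embeds_in_group :: "'a::semigroup_mult itself \<Rightarrow> bool" where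
  "embeds_in_group _ \<longleftrightarrow>
     (\<exists>(G :: nat monoid) (f :: 'a \<Rightarrow> nat). group G \<and> inj f \<and> range f \<subseteq> carrier G \<and>
        (\<forall>x y. f (x * y) = f x \<otimes>\<^bsub>G\<^esub> f y))"

type_synonym 'a digraph = "('a \<times> 'a) set"

definition is_path :: "'a digraph \<Rightarrow> 'a list \<Rightarrow> bool" where
  "is_path \<Gamma> p \<longleftrightarrow> p \<noteq> [] \<and> distinct p \<and>
     (\<forall>i. Suc i < length p \<longrightarrow> (p ! i, p ! Suc i) \<in> \<Gamma>)"

definition is_ray :: "'a digraph \<Rightarrow> (nat \<Rightarrow> 'a) \<Rightarrow> bool" where
  "is_ray \<Gamma> r \<longleftrightarrow> inj r \<and> (\<forall>i. (r i, r (Suc i)) \<in> \<Gamma>)"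

definition is_antiray :: "'a digraph \<Rightarrow> (nat \<Rightarrow> 'a) \<Rightarrow> bool" where
  "is_antiray \<Gamma> r \<longleftrightarrow> inj r \<and> (\<forall>i. (r (Suc i), r i) \<in> \<Gamma>)"

text \<open>\<Sigma>' \<preccurlyeq> \<Sigma>: infinitely many pairwise vertex-disjoint paths from \<Sigma>' to \<Sigma>
  (an infinite family indexed by nat; pairwise disjointness forces distinctness).\<close>
definition reaches :: "'a digraph \<Rightarrow> 'a set \<Rightarrow> 'a set \<Rightarrow> bool" where
  "reaches \<Gamma> \<Sigma>' \<Sigma> \<longleftrightarrow>
     (\<exists>P :: nat \<Rightarrow> 'a list. (\<forall>n. is_path \<Gamma> (P n) \<and> hd (P n) \<in> \<Sigma>' \<and> last (P n) \<in> \<Sigma>) \<and>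
        (\<forall>n m. n \<noteq> m \<longrightarrow> set (P n) \<inter> set (P m) = {}))"

definition rays_antirays :: "'a digraph \<Rightarrow> (nat \<Rightarrow> 'a) set" where
  "rays_antirays \<Gamma> = {r. is_ray \<Gamma> r \<or> is_antiray \<Gamma> r}"

definition end_equiv :: "'a digraph \<Rightarrow> ((nat \<Rightarrow> 'a) \<times> (nat \<Rightarrow> 'a)) set" where
  "end_equiv \<Gamma> = {(r, s). r \<in> rays_antirays \<Gamma> \<and> s \<in> rays_antirays \<Gamma> \<and>
      reaches \<Gamma> (range r) (range s) \<and> reaches \<Gamma> (range s) (range r)}"

definition ends :: "'a digraph \<Rightarrow> (nat \<Rightarrow> 'a) set set" where
  "ends \<Gamma> = rays_antirays \<Gamma> // end_equiv \<Gamma>"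

definition right_cayley :: "'a::semigroup_mult set \<Rightarrow> 'a digraph" where
  "right_cayley A = {(x, x * a) | x a. a \<in> A}"

end

theory Submission
  imports Defs
begin

(* S is countable, so (Ore's theorem) S is not left reversible: there are a, b with
   aS \<inter> bS = {}.  Write a and b as words over A.  For every \<sigma> :: nat \<Rightarrow> bool follow, from a,
   the edges of the Cayley graph labelled by the infinite word whose k-th block is ab or ba
   according to \<sigma> k.  Cancellativity and aS \<inter> bS = {} show that a vertex is revisited only
   within two blocks, so loop erasure yields a ray.  If \<sigma> and \<tau> first differ at block k, the
   two rays end up in the disjoint cones p a S and p b S, which no path leaves; so neither ray
   reaches the other by infinitely many disjoint paths, and the ends of these rays are pairwise
   distinct: at least 2^\<aleph>0 ends.  Conversely, over a countable vertex set there are at most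
   2^\<aleph>0 rays and anti-rays, hence at most 2^\<aleph>0 ends. *)

section \<open>Words and finitely generated semigroups\<close>

fun prodl :: "'a::semigroup_mult list \<Rightarrow> 'a" where
  "prodl [] = undefined"
| "prodl (x # xs) = foldl (*) x xs"

lemma foldl_mult: "foldl (*) (u * v) ys = u * foldl (*) v (ys :: 'a::semigroup_mult list)"
  by (induction ys arbitrary: v) (simp_all add: mult.assoc)

lemma prodl_append:
  "xs \<noteq> [] \<Longrightarrow> ys \<noteq> [] \<Longrightarrow> prodl (xs @ ys) = prodl xs * prodl (ys :: 'a::semigroup_mult list)"
  by (cases xs; cases ys) (simp_all add: foldl_mult)

lemma generated_word: "s \<in> generated A \<Longrightarrow> \<exists>xs. xs \<noteq> [] \<and> set xs \<subseteq> A \<and> prodl xs = s"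
proof (induction rule: generated.induct)
  case (gen_base a) thus ?case by (intro exI[of _ "[a]"]) simp
next
  case (gen_step x a)
  then obtain xs where "xs \<noteq> []" "set xs \<subseteq> A" "prodl xs = x" by blast
  thus ?case using gen_step by (intro exI[of _ "xs @ [a]"]) (simp add: prodl_append)
qed

text \<open>A finitely generated semigroup is countable: it is the image of the words over A.\<close>
lemma finitely_generated_countable:
  assumes "finite A" "generated A = (UNIV :: 'a::semigroup_mult set)"
  shows "countable (UNIV :: 'a set)"
proof -
  have "UNIV \<subseteq> prodl ` lists A"
    using generated_word assms(2) by (metis image_iff in_listsI subsetD subsetI UNIV_I)
  moreover have "countable (prodl ` lists A)" using assms(1) by (simp add: countable_finite)
  ultimately show ?thesis using countable_subset by blast
qed

section \<open>Digraphs: separation and cardinality of the set of ends\<close>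

definition forward_closed :: "'a digraph \<Rightarrow> 'a set \<Rightarrow> bool" where
  "forward_closed \<Gamma> C \<longleftrightarrow> (\<forall>x y. (x, y) \<in> \<Gamma> \<longrightarrow> x \<in> C \<longrightarrow> y \<in> C)"

lemma path_in_forward_closed:
  assumes C: "forward_closed \<Gamma> C" and P: "is_path \<Gamma> P" and hd: "hd P \<in> C"
  shows "set P \<subseteq> C"
proof -
  have "i < length P \<longrightarrow> P ! i \<in> C" for i
  proof (induction i)
    case 0 thus ?case using P hd by (simp add: hd_conv_nth is_path_def)
  next
    case (Suc i)
    thus ?case using P C unfolding is_path_def forward_closed_def by (meson Suc_lessD)
  qed
  thus ?thesis by (metis in_set_conv_nth subsetI)
qed

text \<open>If, up to finitely many vertices, \<Sigma>' lies in a forward-closed set disjoint from a set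
  containing \<Sigma> up to finitely many vertices, then every path from \<Sigma>' to \<Sigma> meets one of the two
  finite exceptional sets, so there cannot be infinitely many disjoint such paths.\<close>
lemma not_reaches_if_separated:
  assumes closed: "forward_closed \<Gamma> C'" and disj: "C \<inter> C' = {}"
    and fin: "finite F" "finite F'"
    and src: "\<Sigma>' \<subseteq> F' \<union> C'" and tgt: "\<Sigma> \<subseteq> F \<union> C"
  shows "\<not> reaches \<Gamma> \<Sigma>' \<Sigma>"
proof
  assume "reaches \<Gamma> \<Sigma>' \<Sigma>"
  then obtain P :: "nat \<Rightarrow> 'a list" where
    P: "\<And>n. is_path \<Gamma> (P n) \<and> hd (P n) \<in> \<Sigma>' \<and> last (P n) \<in> \<Sigma>" and
    Pd: "\<And>n m. n \<noteq> m \<Longrightarrow> set (P n) \<inter> set (P m) = {}"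
    unfolding reaches_def by blast
  have ne: "P n \<noteq> []" for n using P unfolding is_path_def by blast
  define \<phi> where "\<phi> n = (if hd (P n) \<in> F' then hd (P n) else last (P n))" for n
  have \<phi>: "\<phi> n \<in> F' \<union> F \<and> \<phi> n \<in> set (P n)" for n
  proof (cases "hd (P n) \<in> F'")
    case True thus ?thesis using ne[of n] unfolding \<phi>_def by simp
  next
    case False
    hence "hd (P n) \<in> C'" using P src by blast
    hence "last (P n) \<in> C'"
      using path_in_forward_closed[OF closed] P ne[of n] by (meson last_in_set subsetD)
    hence "last (P n) \<in> F" using P tgt disj by blast
    thus ?thesis using False ne[of n] unfolding \<phi>_def by simp
  qed
  have "inj \<phi>" by (rule injI) (metis \<phi> Pd disjoint_iff)
  moreover have "finite (range \<phi>)" using \<phi> fin by (meson finite_Un finite_subset image_subset_iff)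
  ultimately show False using finite_imageD by blast
qed

text \<open>Loop erasure: a walk visiting every vertex only finitely often contains a ray, obtained
  by repeatedly jumping to the last visit of the current vertex.\<close>
definition lastocc :: "(nat \<Rightarrow> 'a) \<Rightarrow> nat \<Rightarrow> nat" where
  "lastocc w k = Max {m. w m = w k}"

fun erase_index :: "(nat \<Rightarrow> 'a) \<Rightarrow> nat \<Rightarrow> nat" where
  "erase_index w 0 = lastocc w 0"
| "erase_index w (Suc i) = lastocc w (Suc (erase_index w i))"

lemma loop_erasure:
  assumes fin: "\<And>n. finite {m. w m = w n}" and edge: "\<And>n. (w n, w (Suc n)) \<in> \<Gamma>"
  shows "is_ray \<Gamma> (w \<circ> erase_index w)"
proof -
  have lo1: "w (lastocc w k) = w k" for k
    unfolding lastocc_def using Max_in[OF fin[of k]] by auto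
  have lo2: "k \<le> lastocc w k" for k
    unfolding lastocc_def using Max_ge[OF fin[of k]] by auto
  have lo3: "w m \<noteq> w k" if "m > lastocc w k" for m k
    using that Max_ge[OF fin[of k], of m] unfolding lastocc_def by auto
  have mono: "strict_mono (erase_index w)"
    by (rule strict_mono_Suc_iff[THEN iffD2]) (simp add: Suc_le_lessD lo2)
  have last_visit: "\<exists>k. erase_index w i = lastocc w k" for i by (cases i) auto
  have no_revisit: "w (erase_index w j) \<noteq> w (erase_index w i)" if "i < j" for i j
  proof -
    obtain k where k: "erase_index w i = lastocc w k" using last_visit by blast
    have "erase_index w j > lastocc w k" using mono that k by (metis strict_mono_less)
    thus ?thesis using lo3 lo1 k by metis
  qed
  have "inj (w \<circ> erase_index w)"
    by (rule injI) (metis comp_apply linorder_neqE_nat no_revisit)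
  moreover have "((w \<circ> erase_index w) i, (w \<circ> erase_index w) (Suc i)) \<in> \<Gamma>" for i
    using edge[of "erase_index w i"] lo1[of "Suc (erase_index w i)"] by simp
  ultimately show ?thesis unfolding is_ray_def by blast
qed

text \<open>A ray reaches itself through its own (disjoint, one-vertex) vertices, so it lies in its end.\<close>
lemma ray_end_equiv_refl:
  assumes "is_ray \<Gamma> r" shows "(r, r) \<in> end_equiv \<Gamma>"
proof -
  have "reaches \<Gamma> (range r) (range r)"
    unfolding reaches_def
  proof (intro exI[of _ "\<lambda>n. [r n]"] conjI allI impI)
    fix n show "is_path \<Gamma> [r n]" unfolding is_path_def by simp
    show "hd [r n] \<in> range r" "last [r n] \<in> range r" by auto
  next
    fix n m :: nat assume "n \<noteq> m"
    thus "set [r n] \<inter> set [r m] = {}" using assms unfolding is_ray_def by (auto dest: injD)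
  qed
  thus ?thesis using assms unfolding end_equiv_def rays_antirays_def by blast
qed

lemma ends_lower_bound:
  fixes r :: "'i \<Rightarrow> nat \<Rightarrow> 'a"
  assumes ray: "\<And>i. is_ray \<Gamma> (r i)"
    and apart: "\<And>i j. i \<noteq> j \<Longrightarrow> \<not> reaches \<Gamma> (range (r j)) (range (r i))"
  shows "(UNIV :: 'i set) \<lesssim> ends \<Gamma>"
  unfolding lepoll_def
proof (intro exI[of _ "\<lambda>i. end_equiv \<Gamma> `` {r i}"] conjI)
  show "inj_on (\<lambda>i. end_equiv \<Gamma> `` {r i}) UNIV"
  proof (rule inj_onI)
    fix i j assume "end_equiv \<Gamma> `` {r i} = end_equiv \<Gamma> `` {r j}"
    hence "(r j, r i) \<in> end_equiv \<Gamma>" using ray_end_equiv_refl[OF ray, of i] by blast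
    thus "i = j" using apart unfolding end_equiv_def by blast
  qed
  show "range (\<lambda>i. end_equiv \<Gamma> `` {r i}) \<subseteq> ends \<Gamma>"
    using ray unfolding ends_def rays_antirays_def by (blast intro: quotientI)
qed

text \<open>Upper bound: over a countable vertex set each end is determined by a representative
  sequence, and sequences in a countable set are coded injectively by sets of naturals.\<close>
lemma ends_upper_bound:
  fixes \<Gamma> :: "'a digraph"
  assumes cnt: "countable (UNIV :: 'a set)"
  shows "ends \<Gamma> \<lesssim> (UNIV :: nat set set)"
proof -
  define rep where "rep C = (SOME r. r \<in> rays_antirays \<Gamma> \<and> C = end_equiv \<Gamma> `` {r})" for C
  have rep: "C = end_equiv \<Gamma> `` {rep C}" if "C \<in> ends \<Gamma>" for C
  proof -
    have "\<exists>r. r \<in> rays_antirays \<Gamma> \<and> C = end_equiv \<Gamma> `` {r}"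
      using that unfolding ends_def quotient_def by blast
    thus ?thesis unfolding rep_def by (rule someI2_ex) blast
  qed
  have "inj_on rep (ends \<Gamma>)" by (rule inj_onI) (metis rep)
  define enc where "enc = to_nat_on (UNIV :: 'a set)"
  have enc: "inj enc" unfolding enc_def by (rule inj_on_to_nat_on[OF cnt])
  define graph where "graph r = range (\<lambda>n. prod_encode (n, enc (r n)))" for r :: "nat \<Rightarrow> 'a"
  have "inj graph"
  proof (rule injI)
    fix r s assume h: "graph r = graph s"
    show "r = s"
    proof
      fix n
      have "prod_encode (n, enc (r n)) \<in> graph s" using h unfolding graph_def by blast
      then obtain m where "prod_encode (n, enc (r n)) = prod_encode (m, enc (s m))"
        unfolding graph_def by blast
      thus "r n = s n" using enc prod_encode_eq by (auto dest: injD)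
    qed
  qed
  hence "inj_on (graph \<circ> rep) (ends \<Gamma>)"
    using \<open>inj_on rep (ends \<Gamma>)\<close> by (simp add: comp_inj_on inj_on_subset)
  thus ?thesis unfolding lepoll_def by blast
qed

section \<open>Cones and walks in right Cayley graphs\<close>

definition cone :: "'a::semigroup_mult \<Rightarrow> 'a set" where
  "cone z = insert z (range ((*) z))"

lemma cone_mult: "y \<in> cone z \<Longrightarrow> y * g \<in> cone z"
  unfolding cone_def by (auto simp: mult.assoc)

lemma forward_closed_cone: "forward_closed (right_cayley A) (cone z)"
  unfolding forward_closed_def right_cayley_def using cone_mult by blast

fun walk :: "(nat \<Rightarrow> 'a::semigroup_mult) \<Rightarrow> 'a \<Rightarrow> nat \<Rightarrow> 'a" where
  "walk g x0 0 = x0"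
| "walk g x0 (Suc n) = walk g x0 n * g n"

lemma walk_edge: "(\<And>n. g n \<in> A) \<Longrightarrow> (walk g x0 n, walk g x0 (Suc n)) \<in> right_cayley A"
  unfolding right_cayley_def by auto

lemma walk_segment: "walk g x0 (n + Suc j) = walk g x0 n * prodl (map g [n..<n + Suc j])"
proof (induction j)
  case 0 thus ?case by simp
next
  case (Suc j)
  have "prodl (map g [n..<n + Suc (Suc j)]) = prodl (map g [n..<n + Suc j]) * g (n + Suc j)"
    using prodl_append[of "map g [n..<n + Suc j]" "[g (n + Suc j)]"] by simp
  thus ?case using Suc by (simp add: mult.assoc)
qed

lemma walk_later: "n < m \<Longrightarrow> \<exists>t. walk g x0 m = walk g x0 n * t"
  using walk_segment[of g x0 n "m - n - 1"]
  by (metis Suc_diff_Suc add_diff_inverse_nat diff_Suc_1 not_less_iff_gr_or_eq)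

lemma walk_in_cone: "n \<le> m \<Longrightarrow> walk g x0 m \<in> cone (walk g x0 n)"
proof (induction m)
  case 0 thus ?case by (simp add: cone_def)
next
  case (Suc m)
  show ?case
  proof (cases "n = Suc m")
    case True thus ?thesis by (simp add: cone_def)
  next
    case False thus ?thesis using Suc cone_mult by simp
  qed
qed

lemma walk_range_split: "range (walk g x0) \<subseteq> walk g x0 ` {..<N} \<union> cone (walk g x0 N)"
proof
  fix y assume "y \<in> range (walk g x0)"
  then obtain m where "y = walk g x0 m" by blast
  thus "y \<in> walk g x0 ` {..<N} \<union> cone (walk g x0 N)"
    using walk_in_cone[of N m] by (cases "m < N") auto
qed

section \<open>Cancellative semigroups and Ore's theorem\<close>

locale cancel_semigroup =
  fixes ty :: "'a::semigroup_mult itself"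
  assumes lc: "\<And>(c::'a) x y. c * x = c * y \<Longrightarrow> x = y"
    and rc: "\<And>(c::'a) x y. x * c = y * c \<Longrightarrow> x = y"
begin

lemma local_identity:
  fixes x u z :: 'a assumes "x * u = x" shows "u * z = z" "z * u = z"
proof -
  have uz: "u * z' = z'" for z'
  proof -
    have "x * (u * z') = x * z'" using assms by (simp add: mult.assoc[symmetric])
    thus ?thesis by (rule lc)
  qed
  thus "u * z = z" .
  have "u * u = u" by (rule uz)
  hence "z * u * u = z * u" by (simp add: mult.assoc)
  thus "z * u = z" using rc by blast
qed

end

text \<open>Ore's theorem: a countable cancellative semigroup in which any two principal right
  ideals meet embeds in a group of right fractions x y\<inverse>, here coded by natural numbers.\<close>
locale ore_semigroup = cancel_semigroup ty for ty :: "'a::semigroup_mult itself" +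
  assumes ore: "\<And>(a::'a) b. \<exists>x y. a * x = b * y"
    and cnt: "countable (UNIV :: 'a set)"
begin

text \<open>The pairs (p, q) and (p', q') denote the same fraction p q\<inverse> = p' q'\<inverse>.\<close>
definition frac_eq :: "'a \<times> 'a \<Rightarrow> 'a \<times> 'a \<Rightarrow> bool" where
  "frac_eq u v \<longleftrightarrow> (\<forall>x y. snd u * x = snd v * y \<longrightarrow> fst u * x = fst v * y)"

text \<open>Thanks to the Ore condition, frac_eq is an equivalence relation.\<close>
lemma frac_eq_refl: "frac_eq u u"
  unfolding frac_eq_def using lc by metis

lemma frac_eq_sym: "frac_eq u v \<Longrightarrow> frac_eq v u"
  unfolding frac_eq_def by metis

lemma frac_eq_trans: assumes "frac_eq u v" "frac_eq v w" shows "frac_eq u w"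
  unfolding frac_eq_def
proof (intro allI impI)
  fix x y assume h: "snd u * x = snd w * y"
  obtain p q where pq: "snd u * x * p = snd v * q" using ore by blast
  have 1: "fst u * (x * p) = fst v * q"
    using assms(1) pq unfolding frac_eq_def by (simp add: mult.assoc)
  have "snd v * q = snd w * (y * p)" using pq h by (metis mult.assoc)
  hence 2: "fst v * q = fst w * (y * p)" using assms(2) unfolding frac_eq_def by blast
  have "fst u * x * p = fst w * y * p" using 1 2 by (simp add: mult.assoc)
  thus "fst u * x = fst w * y" using rc by blast
qed

text \<open>Product (p q\<inverse>)(r s\<inverse>) = (p x)(s y)\<inverse> for a common multiple q x = r y.\<close>
definition frac_mul :: "'a \<times> 'a \<Rightarrow> 'a \<times> 'a \<Rightarrow> 'a \<times> 'a" where
  "frac_mul u v = (let pq = (SOME pq. snd u * fst pq = fst v * snd pq)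
                   in (fst u * fst pq, snd v * snd pq))"

lemma frac_mul_spec: "\<exists>p q. snd u * p = fst v * q \<and> frac_mul u v = (fst u * p, snd v * q)"
proof -
  have "\<exists>pq. snd u * fst pq = fst v * snd pq" using ore by force
  hence "snd u * fst (SOME pq. snd u * fst pq = fst v * snd pq)
           = fst v * snd (SOME pq. snd u * fst pq = fst v * snd pq)"
    by (rule someI_ex)
  thus ?thesis unfolding frac_mul_def Let_def by blast
qed

lemma frac_mul_any:
  assumes "snd u * p = fst v * q" "snd u' * p' = fst v' * q'" "frac_eq u u'" "frac_eq v v'"
  shows "frac_eq (fst u * p, snd v * q) (fst u' * p', snd v' * q')"
  unfolding frac_eq_def
proof (intro allI impI)
  fix x y assume "snd (fst u * p, snd v * q) * x = snd (fst u' * p', snd v' * q') * y"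
  hence "snd v * (q * x) = snd v' * (q' * y)" by (simp add: mult.assoc)
  hence "fst v * (q * x) = fst v' * (q' * y)" using assms(4) unfolding frac_eq_def by blast
  hence "snd u * (p * x) = snd u' * (p' * y)" using assms(1,2) by (metis mult.assoc)
  hence "fst u * (p * x) = fst u' * (p' * y)" using assms(3) unfolding frac_eq_def by blast
  thus "fst (fst u * p, snd v * q) * x = fst (fst u' * p', snd v' * q') * y"
    by (simp add: mult.assoc)
qed

lemma frac_mul_cong: "frac_eq u u' \<Longrightarrow> frac_eq v v' \<Longrightarrow> frac_eq (frac_mul u v) (frac_mul u' v')"
  using frac_mul_spec[of u v] frac_mul_spec[of u' v'] frac_mul_any by metis

lemma frac_mul_assoc: "frac_eq (frac_mul (frac_mul u v) w) (frac_mul u (frac_mul v w))"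
proof -
  obtain p q where pq: "snd u * p = fst v * q" "frac_mul u v = (fst u * p, snd v * q)"
    using frac_mul_spec by blast
  obtain r s where rs: "snd v * q * r = fst w * s" "frac_mul (frac_mul u v) w = (fst u * p * r, snd w * s)"
    using frac_mul_spec[of "frac_mul u v" w] pq(2) by auto
  obtain p' q' where pq': "snd v * p' = fst w * q'" "frac_mul v w = (fst v * p', snd w * q')"
    using frac_mul_spec by blast
  obtain r' s' where rs': "snd u * r' = fst v * p' * s'" "frac_mul u (frac_mul v w) = (fst u * r', snd w * q' * s')"
    using frac_mul_spec[of u "frac_mul v w"] pq'(2) by auto
  show ?thesis unfolding frac_eq_def rs(2) rs'(2) fst_conv snd_conv
  proof (intro allI impI)
    fix x y assume "snd w * s * x = snd w * q' * s' * y"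
    hence "s * x = q' * s' * y" using lc by (simp add: mult.assoc)
    hence "fst w * s * x = fst w * q' * s' * y" by (simp add: mult.assoc)
    hence "snd v * (q * r * x) = snd v * (p' * s' * y)" using rs(1) pq'(1) by (metis mult.assoc)
    hence "q * r * x = p' * s' * y" using lc by blast
    hence "fst v * q * r * x = fst v * p' * s' * y" by (simp add: mult.assoc)
    hence "snd u * (p * r * x) = snd u * (r' * y)" using pq(1) rs'(1) by (metis mult.assoc)
    hence "p * r * x = r' * y" using lc by blast
    thus "fst u * p * r * x = fst u * r' * y" by (simp add: mult.assoc)
  qed
qed

text \<open>An arbitrary fixed element e; e e\<inverse> is the unit of the group of fractions.\<close>
definition e :: 'a where "e = undefined"

lemma frac_mul_unit: "frac_eq (frac_mul (e, e) u) u"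
proof -
  obtain p q where pq: "e * p = fst u * q" "frac_mul (e, e) u = (e * p, snd u * q)"
    using frac_mul_spec[of "(e, e)" u] by auto
  show ?thesis unfolding frac_eq_def pq(2) fst_conv snd_conv
  proof (intro allI impI)
    fix x y assume "snd u * q * x = snd u * y"
    hence "q * x = y" using lc by (simp add: mult.assoc)
    thus "e * p * x = fst u * y" using pq(1) by (simp add: mult.assoc)
  qed
qed

lemma frac_mul_inverse: "frac_eq (frac_mul (snd u, fst u) u) (e, e)"
proof -
  obtain p q where pq: "fst u * p = fst u * q" "frac_mul (snd u, fst u) u = (snd u * p, snd u * q)"
    using frac_mul_spec[of "(snd u, fst u)" u] by auto
  have "p = q" using pq(1) lc by blast
  thus ?thesis unfolding frac_eq_def pq(2) by simp
qed

lemma frac_embed_hom: "frac_eq (frac_mul (x * e, e) (y * e, e)) (x * y * e, e)"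
proof -
  obtain p q where pq: "e * p = y * e * q" "frac_mul (x * e, e) (y * e, e) = (x * e * p, e * q)"
    using frac_mul_spec[of "(x * e, e)" "(y * e, e)"] by auto
  show ?thesis unfolding frac_eq_def pq(2) fst_conv snd_conv
  proof (intro allI impI)
    fix s t assume "e * q * s = e * t"
    hence "q * s = t" using lc by (simp add: mult.assoc)
    thus "x * e * p * s = x * y * e * t" using pq(1) by (metis mult.assoc)
  qed
qed

lemma frac_embed_inj: assumes "frac_eq (x * e, e) (y * e, e)" shows "x = y"
proof -
  have "x * e * e = y * e * e" using assms unfolding frac_eq_def by simp
  thus ?thesis using rc by blast
qed

definition frac_class :: "'a \<times> 'a \<Rightarrow> ('a \<times> 'a) set" where "frac_class u = {v. frac_eq u v}"

definition code :: "'a \<times> 'a \<Rightarrow> nat" where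
  "code u = to_nat_on (range frac_class) (frac_class u)"

lemma code_eq: "code u = code v \<longleftrightarrow> frac_eq u v"
proof -
  have "countable (range frac_class)"
    using cnt by (intro countable_image) (metis countable_SIGMA UNIV_Times_UNIV)
  hence "code u = code v \<longleftrightarrow> frac_class u = frac_class v"
    unfolding code_def by (simp add: inj_on_eq_iff[OF inj_on_to_nat_on])
  also have "\<dots> \<longleftrightarrow> frac_eq u v" unfolding frac_class_def
    by (metis (mono_tags, lifting) mem_Collect_eq frac_eq_refl frac_eq_sym frac_eq_trans subsetI subset_antisym)
  finally show ?thesis .
qed

definition decode :: "nat \<Rightarrow> 'a \<times> 'a" where "decode n = (SOME u. code u = n)"

lemma decode_code: "frac_eq (decode (code u)) u"
proof -
  have "code (decode (code u)) = code u" unfolding decode_def by (rule someI_ex) blast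
  thus ?thesis using code_eq by blast
qed

definition frac_group :: "nat monoid" where
  "frac_group = \<lparr>carrier = range code,
                 mult = (\<lambda>n m. code (frac_mul (decode n) (decode m))), one = code (e, e)\<rparr>"

lemma frac_group_mult: "code u \<otimes>\<^bsub>frac_group\<^esub> code v = code (frac_mul u v)"
  unfolding frac_group_def by (simp add: code_eq frac_mul_cong decode_code)

lemma frac_group_one: "\<one>\<^bsub>frac_group\<^esub> = code (e, e)"
  unfolding frac_group_def by simp

lemma group_frac_group: "group frac_group"
proof (rule groupI)
  fix x y assume "x \<in> carrier frac_group" "y \<in> carrier frac_group"
  thus "x \<otimes>\<^bsub>frac_group\<^esub> y \<in> carrier frac_group" unfolding frac_group_def by auto
next
  show "\<one>\<^bsub>frac_group\<^esub> \<in> carrier frac_group" unfolding frac_group_def by auto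
next
  fix x y z assume "x \<in> carrier frac_group" "y \<in> carrier frac_group" "z \<in> carrier frac_group"
  then obtain u v w where "x = code u" "y = code v" "z = code w" unfolding frac_group_def by auto
  thus "x \<otimes>\<^bsub>frac_group\<^esub> y \<otimes>\<^bsub>frac_group\<^esub> z = x \<otimes>\<^bsub>frac_group\<^esub> (y \<otimes>\<^bsub>frac_group\<^esub> z)"
    by (simp add: frac_group_mult code_eq frac_mul_assoc)
next
  fix x assume "x \<in> carrier frac_group"
  then obtain u where u: "x = code u" unfolding frac_group_def by auto
  thus "\<one>\<^bsub>frac_group\<^esub> \<otimes>\<^bsub>frac_group\<^esub> x = x"
    by (simp add: frac_group_one frac_group_mult code_eq frac_mul_unit)
  have "code (snd u, fst u) \<otimes>\<^bsub>frac_group\<^esub> x = \<one>\<^bsub>frac_group\<^esub>"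
    unfolding u frac_group_one by (simp only: frac_group_mult code_eq frac_mul_inverse)
  moreover have "code (snd u, fst u) \<in> carrier frac_group" unfolding frac_group_def by simp
  ultimately show "\<exists>y\<in>carrier frac_group. y \<otimes>\<^bsub>frac_group\<^esub> x = \<one>\<^bsub>frac_group\<^esub>" by blast
qed

theorem ore_embeds_in_group: "embeds_in_group TYPE('a)"
  unfolding embeds_in_group_def
proof (intro exI conjI allI)
  show "group frac_group" by (rule group_frac_group)
  show "inj (\<lambda>x. code (x * e, e))" by (rule injI) (simp add: code_eq frac_embed_inj)
  show "range (\<lambda>x. code (x * e, e)) \<subseteq> carrier frac_group" unfolding frac_group_def by auto
  fix x y show "code (x * y * e, e) = code (x * e, e) \<otimes>\<^bsub>frac_group\<^esub> code (y * e, e)"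
    by (simp add: frac_group_mult code_eq frac_embed_hom frac_eq_sym)
qed

end

lemma disjoint_right_ideals:
  assumes "cancellative TYPE('a::semigroup_mult)" "countable (UNIV :: 'a set)"
    and "\<not> embeds_in_group TYPE('a)"
  shows "\<exists>a b::'a. \<forall>x y. a * x \<noteq> b * y"
proof (rule ccontr)
  assume "\<not> ?thesis"
  hence ore: "\<And>a b::'a. \<exists>x y. a * x = b * y" by blast
  have "\<And>c x y::'a. c * x = c * y \<Longrightarrow> x = y" "\<And>c x y::'a. x * c = y * c \<Longrightarrow> x = y"
    using assms(1) unfolding cancellative_def by blast+
  then interpret ore_semigroup "TYPE('a)" using ore assms(2) by unfold_locales
  show False using assms(3) ore_embeds_in_group by blast
qed

section \<open>Continuum many separated rays\<close>

locale branching = cancel_semigroup ty for ty :: "'a::semigroup_mult itself" +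
  fixes A :: "'a set" and a b :: 'a
  assumes genA: "generated A = UNIV"
    and disj: "\<And>x y. a * x \<noteq> b * y"
begin

text \<open>No walk returns to a vertex after passing through a letter a or b.\<close>
lemma no_return: assumes "c = a \<or> c = b" shows "x * (s * c * t) \<noteq> x"
proof
  assume "x * (s * c * t) = x"
  then have unit: "\<And>z. s * c * t * z = z" "\<And>z. z * (s * c * t) = z"
    using local_identity by blast+
  have "s * (c * t * s) = s * (s * c * t)" using unit by (simp add: mult.assoc[symmetric])
  hence cts: "c * t * s = s * c * t" by (rule lc)
  have "c * (t * s * d) = d * (s * c * t)" for d
    using unit cts by (metis mult.assoc)
  thus False using assms disj by metis
qed

lemma cones_disjoint: "cone (p * a) \<inter> cone (p * b) = {}"
proof (rule ccontr)
  assume "cone (p * a) \<inter> cone (p * b) \<noteq> {}"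
  then obtain y where y: "y \<in> cone (p * a)" "y \<in> cone (p * b)" by blast
  have "\<exists>s. y * q = p * c * s" if "y \<in> cone (p * c)" for c q
    using that unfolding cone_def by (auto simp: mult.assoc)
  then obtain s t where "y * a = p * a * s" "y * a = p * b * t" using y by metis
  hence "p * (a * s) = p * (b * t)" by (simp add: mult.assoc)
  hence "a * s = b * t" by (rule lc)
  thus False using disj by blast
qed

definition word_a :: "'a list" where "word_a = (SOME xs. xs \<noteq> [] \<and> set xs \<subseteq> A \<and> prodl xs = a)"
definition word_b :: "'a list" where "word_b = (SOME xs. xs \<noteq> [] \<and> set xs \<subseteq> A \<and> prodl xs = b)"

lemma word_a: "word_a \<noteq> [] \<and> set word_a \<subseteq> A \<and> prodl word_a = a"
  unfolding word_a_def by (rule someI_ex) (use generated_word genA in blast)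

lemma word_b: "word_b \<noteq> [] \<and> set word_b \<subseteq> A \<and> prodl word_b = b"
  unfolding word_b_def by (rule someI_ex) (use generated_word genA in blast)

definition L :: nat where "L = length word_a + length word_b"

definition block :: "(nat \<Rightarrow> bool) \<Rightarrow> nat \<Rightarrow> 'a list" where
  "block \<sigma> k = (if \<sigma> k then word_a @ word_b else word_b @ word_a)"

definition lead :: "(nat \<Rightarrow> bool) \<Rightarrow> nat \<Rightarrow> 'a" where "lead \<sigma> k = (if \<sigma> k then a else b)"
definition lead_len :: "(nat \<Rightarrow> bool) \<Rightarrow> nat \<Rightarrow> nat" where
  "lead_len \<sigma> k = (if \<sigma> k then length word_a else length word_b)"

definition letter :: "(nat \<Rightarrow> bool) \<Rightarrow> nat \<Rightarrow> 'a" where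
  "letter \<sigma> n = block \<sigma> (n div L) ! (n mod L)"

abbreviation W :: "(nat \<Rightarrow> bool) \<Rightarrow> nat \<Rightarrow> 'a" where "W \<sigma> \<equiv> walk (letter \<sigma>) a"

lemma block_length: "length (block \<sigma> k) = L"
  unfolding block_def L_def by simp

lemma lead_len_bounds: "0 < lead_len \<sigma> k" "lead_len \<sigma> k < L"
  using word_a word_b unfolding lead_len_def L_def by auto

lemma letter_in_A: "letter \<sigma> n \<in> A"
proof -
  have "n mod L < L" using lead_len_bounds[of \<sigma> 0] by simp
  hence "letter \<sigma> n \<in> set (block \<sigma> (n div L))" unfolding letter_def by (simp add: block_length)
  moreover have "set (block \<sigma> k) \<subseteq> A" for k using word_a word_b unfolding block_def by auto
  ultimately show ?thesis by blast
qed

lemma letters_of_block: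
  assumes "j \<le> L" shows "map (letter \<sigma>) [k * L..<k * L + j] = take j (block \<sigma> k)"
proof (rule nth_equalityI)
  show "length (map (letter \<sigma>) [k * L..<k * L + j]) = length (take j (block \<sigma> k))"
    using assms block_length by simp
  fix i assume "i < length (map (letter \<sigma>) [k * L..<k * L + j])"
  hence i: "i < j" by simp
  hence "(k * L + i) div L = k" "(k * L + i) mod L = i" using assms by auto
  thus "map (letter \<sigma>) [k * L..<k * L + j] ! i = take j (block \<sigma> k) ! i"
    using i unfolding letter_def by (simp add: add.commute)
qed

lemma walk_block_lead: "W \<sigma> (k * L + lead_len \<sigma> k) = W \<sigma> (k * L) * lead \<sigma> k"
proof -
  obtain j where j: "lead_len \<sigma> k = Suc j" using lead_len_bounds by (metis gr0_implies_Suc)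
  have "W \<sigma> (k * L + Suc j) = W \<sigma> (k * L) * prodl (map (letter \<sigma>) [k * L..<k * L + Suc j])"
    by (rule walk_segment)
  also have "map (letter \<sigma>) [k * L..<k * L + Suc j] = take (lead_len \<sigma> k) (block \<sigma> k)"
    using letters_of_block lead_len_bounds j by (metis less_imp_le)
  also have "prodl \<dots> = lead \<sigma> k" unfolding block_def lead_len_def lead_def using word_a word_b by auto
  finally show ?thesis using j by simp
qed

text \<open>A vertex is revisited only within 2 L steps: a longer loop would contain the first half
  of a complete block, i.e. pass through a or b, contradicting no_return.\<close>
lemma revisit_bound: assumes "W \<sigma> i = W \<sigma> j" "i < j" shows "j < i + 2 * L"
proof (rule ccontr)
  assume far: "\<not> j < i + 2 * L"
  define k where "k = Suc (i div L)"
  have "i div L * L \<le> i" "i < i div L * L + L"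
    using div_mult_mod_eq[of i L] lead_len_bounds(2)[of \<sigma> 0] mod_less_divisor[of L i] by linarith+
  moreover have "k * L = i div L * L + L" unfolding k_def by simp
  ultimately have before: "i < k * L" and after: "k * L + lead_len \<sigma> k < j"
    using lead_len_bounds(2)[of \<sigma> k] far by linarith+
  obtain s where s: "W \<sigma> (k * L) = W \<sigma> i * s" using walk_later before by blast
  obtain t where t: "W \<sigma> j = W \<sigma> (k * L + lead_len \<sigma> k) * t" using walk_later after by blast
  have "W \<sigma> i * (s * lead \<sigma> k * t) = W \<sigma> i"
    using assms(1) t s walk_block_lead[of \<sigma> k] by (simp add: mult.assoc)
  moreover have "lead \<sigma> k = a \<or> lead \<sigma> k = b" unfolding lead_def by simp
  ultimately show False using no_return by blast
qed

lemma walk_finite_visits: "finite {m. W \<sigma> m = W \<sigma> n}"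
proof (rule finite_subset)
  show "{m. W \<sigma> m = W \<sigma> n} \<subseteq> {..<n + 2 * L}"
  proof
    fix m assume "m \<in> {m. W \<sigma> m = W \<sigma> n}"
    thus "m \<in> {..<n + 2 * L}"
      using revisit_bound[of \<sigma> n m] lead_len_bounds(2)[of \<sigma> 0] by (cases "n < m") auto
  qed
qed simp

definition ray :: "(nat \<Rightarrow> bool) \<Rightarrow> nat \<Rightarrow> 'a" where "ray \<sigma> = W \<sigma> \<circ> erase_index (W \<sigma>)"

lemma is_ray: "is_ray (right_cayley A) (ray \<sigma>)"
  unfolding ray_def by (rule loop_erasure[OF walk_finite_visits walk_edge[OF letter_in_A]])

lemma ray_tail: "range (ray \<sigma>) \<subseteq> W \<sigma> ` {..<N} \<union> cone (W \<sigma> N)"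
proof -
  have "range (ray \<sigma>) \<subseteq> range (W \<sigma>)" unfolding ray_def by auto
  thus ?thesis using walk_range_split by blast
qed

lemma walk_agree: assumes "\<forall>i<k. \<sigma> i = \<tau> i" shows "n \<le> k * L \<Longrightarrow> W \<sigma> n = W \<tau> n"
proof (induction n)
  case (Suc n)
  hence "n div L < k" using less_mult_imp_div_less by (metis Suc_le_lessD)
  hence "letter \<sigma> n = letter \<tau> n" unfolding letter_def block_def using assms by simp
  thus ?case using Suc by simp
qed simp

text \<open>At the first block where \<sigma> and \<tau> differ, the walks enter disjoint cones p a S and p b S,
  so the rays are eventually in disjoint forward-closed sets.\<close>
lemma rays_separated: assumes "\<sigma> \<noteq> \<tau>"
  shows "\<not> reaches (right_cayley A) (range (ray \<tau>)) (range (ray \<sigma>))"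
proof -
  define k where "k = (LEAST k. \<sigma> k \<noteq> \<tau> k)"
  have differ: "\<sigma> k \<noteq> \<tau> k" unfolding k_def by (rule LeastI_ex) (use assms in blast)
  have "\<forall>i<k. \<sigma> i = \<tau> i" unfolding k_def using not_less_Least by blast
  hence common: "W \<tau> (k * L) = W \<sigma> (k * L)" using walk_agree by simp
  define Ns where "Ns = k * L + lead_len \<sigma> k"
  define Nt where "Nt = k * L + lead_len \<tau> k"
  have "W \<sigma> Ns = W \<sigma> (k * L) * lead \<sigma> k" "W \<tau> Nt = W \<sigma> (k * L) * lead \<tau> k"
    unfolding Ns_def Nt_def using walk_block_lead common by metis+
  hence "cone (W \<sigma> Ns) \<inter> cone (W \<tau> Nt) = {}"
    using differ cones_disjoint[of "W \<sigma> (k * L)"] unfolding lead_def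
    by (cases "\<sigma> k") (simp_all add: Int_commute)
  from forward_closed_cone this finite_imageI finite_imageI ray_tail ray_tail
  show ?thesis by (rule not_reaches_if_separated) simp_all
qed

lemma continuum_many_ends: "(UNIV :: nat set set) \<lesssim> ends (right_cayley A)"
proof (rule ends_lower_bound[where r = "\<lambda>X. ray (\<lambda>n. n \<in> X)"])
  fix X Y :: "nat set" assume "X \<noteq> Y"
  hence "(\<lambda>n. n \<in> X) \<noteq> (\<lambda>n. n \<in> Y)" by (metis Collect_mem_eq)
  thus "\<not> reaches (right_cayley A) (range (ray (\<lambda>n. n \<in> Y))) (range (ray (\<lambda>n. n \<in> X)))"
    by (rule rays_separated)
qed (rule is_ray)

end

theorem mainTheorem14:
  fixes A :: "'a::semigroup_mult set"
  assumes "cancellative TYPE('a)"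
    and "finite A" and "generated A = UNIV"
    and "\<not> embeds_in_group TYPE('a)"
  shows "ends (right_cayley A) \<approx> (UNIV :: nat set set)"
proof -
  have countable: "countable (UNIV :: 'a set)"
    using finitely_generated_countable assms(2,3) by blast
  then obtain a b :: 'a where "\<And>x y. a * x \<noteq> b * y"
    using disjoint_right_ideals assms(1,4) by blast
  then interpret branching "TYPE('a)" A a b
    using assms(1,3) unfolding cancellative_def by unfold_locales blast+
  show ?thesis by (rule lepoll_antisym[OF ends_upper_bound[OF countable] continuum_many_ends])
qed

end
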